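(* Consider a degree-corrected stochastic block model with $K$ communities, membership matrix $\Theta\in\mathbb M_{n,K}$ (every community nonempty), symmetric $B\in[0,1]^{K\times K}$ with $\mathrm{rank}(B)=K'\le K$, and node propensities $\vartheta\in\mathbb R^n_{+}$ with $\max_{i\in G_k}\vartheta_i=1$ for each $k$. Let $P=\mathrm{diag}(\vartheta)\Theta B\Theta^\intercal\mathrm{diag}(\vartheta)=U\Sigma U^\intercal$ be its eigenvalue decomposition with $U\in\mathbb R^{n\times K'}$ having orthonormal columns. Let $\phi_k\in\mathbb R^n$ agree with $\vartheta$ on $G_k$ and be zero elsewhere, $\Omega=\mathrm{diag}(\|\phi_1\|_2,\dots,\|\phi_K\|_2)$, $\bar B=\Omega B\Omega$, and let $\bar B=HDH^\intercal$ be its eigenvalue decomposition with $H\in\mathbb R^{K\times K'}$. Then: (a) If $K'=K$, then $\cos(U_{i\ast},U_{j\ast})=1$ whenever $\Theta_{i\ast}=\Theta_{j\ast}$ and $\cos(U_{i\ast},U_{j\ast})=0$ whenever $\Theta_{i\ast}\ne\Theta_{j\ast}$. (b) If $K'<K$, then $\cos(U_{i\ast},U_{j\ast})=1$ whenever $\Theta_{i\ast}=\Theta_{j\ast}$; and if the rows of $H$ are not pairwise proportional in the sense that there is a deterministic sequence $\xi'_n<1$ with $\max_{k\ne l}\cos(H_{k\ast},H_{l\ast})\le\xi'_n$, then for $\Theta_{i\ast}\ne\Theta_{j\ast}$, $\cos(U_{i\ast},U_{j\ast})=\cos(H_{g_i\ast},H_{g_j\ast})\le\xi'_n<1$.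
   Context: $\mathbb M_{n,K}$: $n\times K$ 0/1 matrices with exactly one $1$ per row; node $i$ belongs to community $g_i$ iff $\Theta_{ig_i}=1$; $G_k=\{i:g_i=k\}$. $M_{i\ast}$ denotes the $i$-th row. For vectors $a,b$, $\cos(a,b)=a^\intercal b/(\|a\|_2\|b\|_2)$. *)

theory Defs
  imports "HOL-Analysis.Analysis"
begin

definition membership_mat :: "real^'k^'n \<Rightarrow> bool" where
  "membership_mat Theta \<longleftrightarrow>
     (\<forall>i k. Theta$i$k = 0 \<or> Theta$i$k = 1) \<and> (\<forall>i. \<exists>!k. Theta$i$k = 1)"

definition comm :: "real^'k^'n \<Rightarrow> 'n \<Rightarrow> 'k" where
  "comm Theta i = (THE k. Theta$i$k = 1)"

definition vcos :: "real^'m \<Rightarrow> real^'m \<Rightarrow> real" where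
  "vcos a b = (a \<bullet> b) / (norm a * norm b)"

definition diag_mat :: "real^'n \<Rightarrow> real^'n^'n" where
  "diag_mat v = (\<chi> i j. if i = j then v$i else 0)"

definition is_diag :: "real^'n^'n \<Rightarrow> bool" where
  "is_diag S \<longleftrightarrow> (\<forall>a b. a \<noteq> b \<longrightarrow> S$a$b = 0)"

definition phi :: "real^'k^'n \<Rightarrow> real^'n \<Rightarrow> 'k \<Rightarrow> real^'n" where
  "phi Theta theta k = (\<chi> i. if comm Theta i = k then theta$i else 0)"

definition Omega_mat :: "real^'k^'n \<Rightarrow> real^'n \<Rightarrow> real^'k^'k" where
  "Omega_mat Theta theta = diag_mat (\<chi> k. norm (phi Theta theta k))"

end

theory Submission
  imports Defs
begin

(* Let Q be the matrix with orthonormal columns phi_k / |phi_k|, so that diag(theta) Theta = Q Omega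
   and P = Q Bbar Q^T = (Q H) D (Q H)^T.  Thus U Sigma U^T and (Q H) D (Q H)^T factor P through
   matrices with orthonormal columns, and both middle factors are invertible because rank B = K';
   hence U U^T = (Q H) (Q H)^T.  The rows of U therefore have the same Gram matrix as the rows of
   Q H, the i-th of which is theta_i / |phi_(g_i)| times H_(g_i), and cosines ignore positive
   scalings.  When K' = K, H is square, so its rows are orthonormal as well. *)

lemma vcos_scaleR:
  assumes "a > 0" "b > 0"
  shows "vcos (a *\<^sub>R v) (b *\<^sub>R w) = vcos v w"
  using assms by (simp add: vcos_def)

lemma vcos_self: "v \<noteq> 0 \<Longrightarrow> vcos v v = 1"
  by (simp add: vcos_def dot_square_norm power2_eq_square)

lemma matrix_mult_transpose_nth: "(A ** transpose A) $ i $ j = A$i \<bullet> A$j"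
  by (simp add: matrix_matrix_mult_def transpose_def inner_vec_def)

lemma norm_row_eq_if_gram_eq:
  fixes A :: "real^'m^'n" and C :: "real^'p^'n"
  assumes "A ** transpose A = C ** transpose C"
  shows "norm (A$i) = norm (C$i)"
  using assms by (metis matrix_mult_transpose_nth norm_eq_sqrt_inner)

lemma vcos_row_eq_if_gram_eq:
  fixes A :: "real^'m^'n" and C :: "real^'p^'n"
  assumes "A ** transpose A = C ** transpose C"
  shows "vcos (A$i) (A$j) = vcos (C$i) (C$j)"
  using assms by (metis vcos_def matrix_mult_transpose_nth norm_row_eq_if_gram_eq)

lemma gram_eq_scaled_rows:
  fixes A :: "real^'m^'n" and C :: "real^'p^'n" and E :: "real^'p^'k"
  assumes gram: "A ** transpose A = C ** transpose C"
    and rows: "\<And>i. C$i = c i *\<^sub>R E $ g i" and pos: "\<And>i. c i > 0"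
  shows "vcos (A$i) (A$j) = vcos (E $ g i) (E $ g j)" and "A$i = 0 \<longleftrightarrow> E $ g i = 0"
proof -
  show "vcos (A$i) (A$j) = vcos (E $ g i) (E $ g j)"
    using vcos_row_eq_if_gram_eq[OF gram] by (simp add: rows pos vcos_scaleR)
  have "norm (A$i) = c i * norm (E $ g i)"
    using norm_row_eq_if_gram_eq[OF gram, of i] pos[of i] by (simp add: rows)
  then show "A$i = 0 \<longleftrightarrow> E $ g i = 0"
    using pos[of i] by (metis norm_eq_zero mult_eq_0_iff less_irrefl)
qed

lemma rank_mult3_le_middle:
  fixes A :: "real^'m^'n" and S :: "real^'p^'m" and C :: "real^'q^'p"
  shows "rank (A ** S ** C) \<le> rank S"
  by (meson le_trans rank_mul_le_left rank_mul_le_right)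

lemma right_invertible_if_factor_of_full_rank:
  fixes A :: "real^'m^'n" and S :: "real^'m^'m" and C :: "real^'q^'m"
  assumes "CARD('m) \<le> rank (A ** S ** C)"
  obtains S' where "S ** S' = mat 1"
proof -
  have "rank S = CARD('m)"
    using assms rank_mult3_le_middle[of A S C] rank_bound[of S] by simp
  then show ?thesis
    using that full_rank_surjective matrix_right_invertible_surjective by metis
qed

lemma orthonormal_factor_fixed_by_projection:
  fixes V :: "real^'m^'n" and W :: "real^'p^'n" and L :: "real^'m^'m" and G :: "real^'p^'p"
  assumes V: "transpose V ** V = mat 1" and W: "transpose W ** W = mat 1"
    and L: "L ** L' = mat 1"
    and eq: "V ** L ** transpose V = W ** G ** transpose W"
  shows "W ** transpose W ** V = V"
proof -
  have "V = V ** L ** (transpose V ** V) ** L'"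
    using V L by (metis matrix_mul_assoc matrix_mul_rid)
  also have "\<dots> = W ** (G ** transpose W ** V ** L')"
    using eq by (simp add: matrix_mul_assoc)
  finally have V_eq: "V = W ** (G ** transpose W ** V ** L')" .
  have "W ** transpose W ** V = W ** (transpose W ** W) ** (G ** transpose W ** V ** L')"
    by (subst (1) V_eq) (simp add: matrix_mul_assoc)
  also have "\<dots> = V"
    using W V_eq[symmetric] by simp
  finally show ?thesis .
qed

lemma projections_eq_if_orthonormal_factorizations_eq:
  fixes V :: "real^'m^'n" and W :: "real^'p^'n" and L :: "real^'m^'m" and G :: "real^'p^'p"
  assumes V: "transpose V ** V = mat 1" and W: "transpose W ** W = mat 1"
    and L: "L ** L' = mat 1" and G: "G ** G' = mat 1"
    and eq: "V ** L ** transpose V = W ** G ** transpose W"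
  shows "V ** transpose V = W ** transpose W"
proof -
  have WV: "W ** transpose W ** (V ** transpose V) = V ** transpose V"
    using orthonormal_factor_fixed_by_projection[OF V W L eq]
    by (simp add: matrix_mul_assoc)
  have VW: "V ** transpose V ** (W ** transpose W) = W ** transpose W"
    using orthonormal_factor_fixed_by_projection[OF W V G eq[symmetric]]
    by (simp add: matrix_mul_assoc)
  have "W ** transpose W = transpose (V ** transpose V ** (W ** transpose W))"
    by (simp add: VW matrix_transpose_mul)
  also have "\<dots> = W ** transpose W ** (V ** transpose V)"
    by (simp add: matrix_transpose_mul matrix_mul_assoc)
  finally show ?thesis
    using WV by simp
qed

lemma orthonormal_rows_if_square:
  fixes Y :: "real^'m^'n"
  assumes Y: "transpose Y ** Y = mat 1" and card: "CARD('m) = CARD('n)"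
  shows "Y ** transpose Y = mat 1"
proof -
  have "rank Y = CARD('n)"
    using Y card full_rank_injective matrix_left_invertible_injective by metis
  then obtain R where R: "Y ** R = mat 1"
    using full_rank_surjective matrix_right_invertible_surjective by metis
  have "transpose Y = transpose Y ** (Y ** R)"
    by (simp add: R)
  also have "\<dots> = R"
    by (simp add: Y matrix_mul_assoc)
  finally show ?thesis
    using R by simp
qed

lemma vcos_orthonormal_rows:
  fixes Y :: "real^'m^'n"
  assumes "Y ** transpose Y = mat 1"
  shows "vcos (Y$k) (Y$l) = (if k = l then 1 else 0)"
proof -
  have "Y$k \<bullet> Y$l = (if k = l then 1 else 0)" for k l
    using assms matrix_mult_transpose_nth[of Y k l] by (simp add: mat_def)
  then show ?thesis
    by (simp add: vcos_def norm_eq_sqrt_inner)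
qed

lemma diag_mat_mult_diag_mat: "diag_mat a ** diag_mat b = diag_mat (\<chi> k. a$k * b$k)"
  by (simp add: vec_eq_iff diag_mat_def matrix_matrix_mult_def mult_delta_left mult_delta_right
      sum.delta)

lemma mat_1_eq_diag_mat: "mat 1 = diag_mat (\<chi> k. 1)"
  by (simp add: vec_eq_iff diag_mat_def mat_def)

lemma transpose_diag_mat [simp]: "transpose (diag_mat v) = diag_mat v"
  by (simp add: vec_eq_iff diag_mat_def transpose_def)

lemma diag_mat_mult_nth: "(diag_mat v ** A) $ i $ j = v$i * A$i$j"
  by (simp add: diag_mat_def matrix_matrix_mult_def mult_delta_left mult_delta_right sum.delta)

lemma matrix_mult_diag_mat_nth: "(A ** diag_mat v) $ i $ j = A$i$j * v$j"
  by (simp add: diag_mat_def matrix_matrix_mult_def mult_delta_right sum.delta')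

lemma membership_mat_nth:
  assumes "membership_mat Theta"
  shows "Theta$i$k = (if comm Theta i = k then 1 else 0)"
proof -
  have unique: "\<exists>!k. Theta$i$k = 1"
    using assms by (simp add: membership_mat_def)
  then have "Theta$i$(comm Theta i) = 1"
    unfolding comm_def by (rule theI')
  then show ?thesis
    using assms unique unfolding membership_mat_def by metis
qed

lemma membership_rows_eq_iff:
  assumes "membership_mat Theta"
  shows "Theta$i = Theta$j \<longleftrightarrow> comm Theta i = comm Theta j"
  using membership_mat_nth[OF assms] by (auto simp: vec_eq_iff)

lemma phi_nth: "phi Theta theta k $ i = (if comm Theta i = k then theta$i else 0)"
  by (simp add: phi_def)

lemma phi_nonzero:
  assumes "theta$i \<noteq> 0" and "comm Theta i = k"
  shows "phi Theta theta k \<noteq> 0"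
  using assms by (metis phi_nth zero_index)

lemma inner_phi:
  "phi Theta theta k \<bullet> phi Theta theta l = (if k = l then (norm (phi Theta theta k))\<^sup>2 else 0)"
  by (auto simp: power2_norm_eq_inner inner_vec_def phi_nth intro: sum.neutral)

definition phi_basis :: "real^'k^'n \<Rightarrow> real^'n \<Rightarrow> real^'k^'n" where
  "phi_basis Theta theta = (\<chi> i k. phi Theta theta k $ i / norm (phi Theta theta k))"

lemma phi_basis_orthonormal:
  assumes "\<forall>k. phi Theta theta k \<noteq> 0"
  shows "transpose (phi_basis Theta theta) ** phi_basis Theta theta = mat 1"
proof -
  have "(transpose (phi_basis Theta theta) ** phi_basis Theta theta) $ k $ l
      = phi Theta theta k \<bullet> phi Theta theta l
          / (norm (phi Theta theta k) * norm (phi Theta theta l))"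
    for k l
    by (simp add: phi_basis_def matrix_matrix_mult_def transpose_def inner_vec_def
        sum_divide_distrib)
  then show ?thesis
    using assms by (simp add: vec_eq_iff mat_def inner_phi power2_eq_square)
qed

lemma Omega_mat_invertible:
  assumes "\<forall>k. phi Theta theta k \<noteq> 0"
  shows "invertible (Omega_mat Theta theta)"
  unfolding invertible_def Omega_mat_def
  by (rule exI[of _ "diag_mat (\<chi> k. 1 / norm (phi Theta theta k))"])
    (simp add: assms diag_mat_mult_diag_mat mat_1_eq_diag_mat)

lemma phi_basis_mult_Omega_mat:
  assumes "membership_mat Theta" and "\<forall>k. phi Theta theta k \<noteq> 0"
  shows "phi_basis Theta theta ** Omega_mat Theta theta = diag_mat theta ** Theta"
  using assms
  by (simp add: vec_eq_iff Omega_mat_def phi_basis_def matrix_mult_diag_mat_nth diag_mat_mult_nth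
      membership_mat_nth phi_nth)

lemma phi_basis_mult_nth:
  "(phi_basis Theta theta ** H) $ i
    = (theta$i / norm (phi Theta theta (comm Theta i))) *\<^sub>R H $ comm Theta i"
proof -
  have "phi_basis Theta theta $ i $ k
      = (if comm Theta i = k then theta$i / norm (phi Theta theta k) else 0)" for k
    by (simp add: phi_basis_def phi_nth)
  then show ?thesis
    by (simp add: vec_eq_iff matrix_matrix_mult_def mult_delta_left sum.delta)
qed

lemma dcbm_mean_eq_phi_basis:
  assumes "membership_mat Theta" and "\<forall>k. phi Theta theta k \<noteq> 0"
  shows "diag_mat theta ** Theta ** B ** transpose Theta ** diag_mat theta
    = phi_basis Theta theta ** (Omega_mat Theta theta ** B ** Omega_mat Theta theta)
        ** transpose (phi_basis Theta theta)"
proof -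
  have "diag_mat theta ** Theta = phi_basis Theta theta ** Omega_mat Theta theta"
    using phi_basis_mult_Omega_mat[OF assms] by simp
  then show ?thesis
    by (metis matrix_mul_assoc matrix_transpose_mul transpose_diag_mat Omega_mat_def)
qed

lemma dcbm_eigenvector_gram:
  fixes Theta :: "real^'k^'n" and B :: "real^'k^'k" and theta :: "real^'n"
    and U :: "real^'k2^'n" and Sigma :: "real^'k2^'k2"
    and H :: "real^'k2^'k" and D :: "real^'k2^'k2"
  assumes Theta: "membership_mat Theta"
    and nonempty: "\<forall>k. \<exists>i. comm Theta i = k"
    and B_rank: "rank B = CARD('k2)"
    and theta_pos: "\<forall>i. theta$i > 0"
    and U_orth: "transpose U ** U = mat 1"
    and P_eig: "diag_mat theta ** Theta ** B ** transpose Theta ** diag_mat theta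
                  = U ** Sigma ** transpose U"
    and H_orth: "transpose H ** H = mat 1"
    and Bbar_eig: "Omega_mat Theta theta ** B ** Omega_mat Theta theta = H ** D ** transpose H"
  shows "U ** transpose U = (phi_basis Theta theta ** H) ** transpose (phi_basis Theta theta ** H)"
proof -
  let ?Q = "phi_basis Theta theta" and ?Om = "Omega_mat Theta theta"
  let ?Bbar = "?Om ** B ** ?Om"
  have phis_nonzero: "\<forall>k. phi Theta theta k \<noteq> 0"
    using nonempty theta_pos by (metis phi_nonzero less_irrefl)
  have Q_orth: "transpose ?Q ** ?Q = mat 1"
    using phis_nonzero by (rule phi_basis_orthonormal)
  have QH_orth: "transpose (?Q ** H) ** (?Q ** H) = mat 1"
    by (simp add: matrix_transpose_mul matrix_mul_assoc[symmetric])
      (simp add: matrix_mul_assoc Q_orth H_orth)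
  have P_Bbar: "U ** Sigma ** transpose U = ?Q ** ?Bbar ** transpose ?Q"
    using P_eig dcbm_mean_eq_phi_basis[OF Theta phis_nonzero] by simp
  have Bbar_Sigma: "?Bbar = (transpose ?Q ** U) ** Sigma ** transpose (transpose ?Q ** U)"
  proof -
    have "?Bbar = (transpose ?Q ** ?Q) ** ?Bbar ** (transpose ?Q ** ?Q)"
      by (simp add: Q_orth)
    also have "\<dots> = transpose ?Q ** (U ** Sigma ** transpose U) ** ?Q"
      by (simp add: P_Bbar matrix_mul_assoc)
    finally show ?thesis
      by (simp add: matrix_transpose_mul matrix_mul_assoc)
  qed
  obtain Om' where Om': "?Om ** Om' = mat 1" "Om' ** ?Om = mat 1"
    using Omega_mat_invertible[OF phis_nonzero] unfolding invertible_def by blast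
  have B_Bbar: "B = Om' ** ?Bbar ** Om'"
    by (simp add: matrix_mul_assoc Om'(2)) (simp add: matrix_mul_assoc[symmetric] Om'(1))
  have "CARD('k2) \<le> rank ?Bbar"
    using B_rank B_Bbar rank_mult3_le_middle by metis
  then obtain Sigma' D' where "Sigma ** Sigma' = mat 1" and "D ** D' = mat 1"
    using Bbar_Sigma Bbar_eig right_invertible_if_factor_of_full_rank by metis
  moreover have "U ** Sigma ** transpose U = (?Q ** H) ** D ** transpose (?Q ** H)"
    by (simp add: P_Bbar Bbar_eig matrix_transpose_mul matrix_mul_assoc)
  ultimately show ?thesis
    using projections_eq_if_orthonormal_factorizations_eq[OF U_orth QH_orth] by blast
qed

theorem lemma3:
  fixes Theta :: "real^'k^'n"
    and B :: "real^'k^'k"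
    and theta :: "real^'n"
    and U :: "real^'k2^'n" and Sigma :: "real^'k2^'k2"
    and H :: "real^'k2^'k" and D :: "real^'k2^'k2"
  assumes Theta: "membership_mat Theta"
    and nonempty: "\<forall>k. \<exists>i. comm Theta i = k"
    and B_sym: "transpose B = B"
    and B_range: "\<forall>k l. 0 \<le> B$k$l \<and> B$k$l \<le> 1"
    and B_rank: "rank B = CARD('k2)"
    and theta_pos: "\<forall>i. theta$i > 0"
    and theta_max: "\<forall>k. Max {theta$i | i. comm Theta i = k} = 1"
    and U_orth: "transpose U ** U = mat 1"
    and Sigma_diag: "is_diag Sigma"
    and P_eig: "diag_mat theta ** Theta ** B ** transpose Theta ** diag_mat theta
                  = U ** Sigma ** transpose U"
    and H_orth: "transpose H ** H = mat 1"
    and D_diag: "is_diag D"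
    and Bbar_eig: "Omega_mat Theta theta ** B ** Omega_mat Theta theta
                  = H ** D ** transpose H"
  shows
    "(CARD('k2) = CARD('k) \<longrightarrow>
        (\<forall>i j. (Theta$i = Theta$j \<longrightarrow> vcos (U$i) (U$j) = 1) \<and>
               (Theta$i \<noteq> Theta$j \<longrightarrow> vcos (U$i) (U$j) = 0))) \<and>
     (CARD('k2) < CARD('k) \<longrightarrow>
        (\<forall>i j. Theta$i = Theta$j \<and> U$i \<noteq> 0 \<longrightarrow> vcos (U$i) (U$j) = 1) \<and>
        (\<forall>xi::real. xi < 1 \<and> (\<forall>k l. k \<noteq> l \<longrightarrow> vcos (H$k) (H$l) \<le> xi) \<longrightarrow>
           (\<forall>i j. Theta$i \<noteq> Theta$j \<longrightarrow>
              vcos (U$i) (U$j) = vcos (H$(comm Theta i)) (H$(comm Theta j)) \<and>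
              vcos (H$(comm Theta i)) (H$(comm Theta j)) \<le> xi \<and> xi < 1)))"
proof -
  let ?g = "comm Theta"
  have scale_pos: "theta$i / norm (phi Theta theta (?g i)) > 0" for i
  proof -
    have "phi Theta theta (?g i) \<noteq> 0"
      using theta_pos[rule_format, of i] by (intro phi_nonzero) auto
    then show ?thesis
      using theta_pos by simp
  qed
  have gram: "U ** transpose U
      = (phi_basis Theta theta ** H) ** transpose (phi_basis Theta theta ** H)"
    by (rule dcbm_eigenvector_gram[OF Theta nonempty B_rank theta_pos U_orth P_eig H_orth Bbar_eig])
  note U_rows = gram_eq_scaled_rows[OF gram phi_basis_mult_nth scale_pos]
  have rows_eq_iff: "Theta$i = Theta$j \<longleftrightarrow> ?g i = ?g j" for i j
    using Theta by (rule membership_rows_eq_iff)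
  have same_community: "vcos (U$i) (U$j) = 1" if "Theta$i = Theta$j" and "U$i \<noteq> 0" for i j
    using that U_rows(1)[of i j] U_rows(2)[of i] rows_eq_iff vcos_self by simp
  have square_case: "vcos (U$i) (U$j) = (if Theta$i = Theta$j then 1 else 0)"
    if "CARD('k2) = CARD('k)" for i j
    using U_rows(1) vcos_orthonormal_rows[OF orthonormal_rows_if_square[OF H_orth that]] rows_eq_iff
    by simp
  show ?thesis
    using square_case same_community U_rows(1) rows_eq_iff by auto
qed

end
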